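(* Let $a,b\in\mathbb F_{q^2}^*$, let $j_1,i_2,j_2$ be integers with $0<j_1<d$, $0<i_2<(q+1)/d$, $0\le j_2<d$, and assume $1+a\epsilon^{j_1k}\ne0$ for all $0\le k<d$. For $0\le k<d$ put $L_k(X)=1+a\epsilon^{j_1k}+b\epsilon^{j_2k}X^{i_2}$. (i) If for some $0\le k<d$ there is $\lambda_k\in\mu_{q+1}$ with $L_k\in\mathcal L_k(i_2,0;\lambda_k)$, then $\lambda_k=(1+a\epsilon^{j_1k})^q/(b\epsilon^{j_2k})$, there is an integer $\alpha(k)$ with $\bigl((1+a^q\epsilon^{-j_1k})/b\bigr)^{(q+1)/d}=\epsilon^{\alpha(k)}$, and $\lambda_k^{(q+1)/d}=\epsilon^{-j_2k(q+1)/d+\alpha(k)}$. (ii) If for every $0\le k<d$ there is $\lambda_k\in\mu_{q+1}$ with $L_k\in\mathcal L_k(i_2,0;\lambda_k)$, then $d$ is even, $j_1=d/2$, $a^{q-1}=-1$ and $(1-a)/b\in\mu_{q+1}$; moreover $((1+a)/(1-a))^{q+1}=1$, and if $u,v\in\mathbb Z/d\mathbb Z$ are defined by $((1-a)/b)^{(q+1)/d}=\epsilon^u$ and $((1+a)/(1-a))^{(q+1)/d}=\epsilon^v$, and $\pi(k)\in\mathbb Z/d\mathbb Z$ by $\lambda_k^{(q+1)/d}=\epsilon^{\pi(k)}$, then for all $k\in\mathbb Z/d\mathbb Z$ $$\pi(k)+(r-i_2)k=\Bigl(-j_2\frac{q+1}{d}+r-i_2\Bigr)k+\delta(k)v+u,$$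 for every integer $r$, where $\delta(k)=0$ if $k$ is even and $\delta(k)=1$ if $k$ is odd.
   Context: $q$ is a prime power, $d$ is a positive divisor of $q+1$, and $\epsilon\in\mathbb F_{q^2}^*$ has multiplicative order $d$. $\mu_{q+1}$ is the subgroup of order $q+1$ of $\mathbb F_{q^2}^*$. For $a\in\mathbb F_{q^2}$, $\bar a=a^q$; for $f(X)=\sum_{i=0}^n a_iX^i\in\mathbb F_{q^2}[X]$ with $a_n\neq0$, $\tilde f(X)=\sum_{i=0}^n\bar a_iX^{n-i}$. For $0\le k<d$, $0\le t<(q+1)/d$ and $\lambda\in\mu_{q+1}$, $\mathcal L_k(t,0;\lambda)$ is the set of $L\in\mathbb F_{q^2}[X]$ with $\deg L=t$, $\tilde L=\lambda L$ and $\gcd(L,X^{(q+1)/d}-\epsilon^k)=1$. *)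

theory Defs
  imports "HOL-Library.Cardinality" "HOL-Computational_Algebra.Polynomial" "HOL-Computational_Algebra.Polynomial_Factorial"
begin

definition tilde_poly :: "nat \<Rightarrow> 'a::field poly \<Rightarrow> 'a poly" where
  "tilde_poly q f = (\<Sum>i\<le>degree f. monom (coeff f i ^ q) (degree f - i))"

text \<open>The subgroup mu_(q+1) of F_(q^2)^*.\<close>
definition mu :: "nat \<Rightarrow> 'a::field set" where
  "mu q = {x. x ^ (q + 1) = 1}"

definition has_mult_order :: "'a::field \<Rightarrow> nat \<Rightarrow> bool" where
  "has_mult_order e d \<longleftrightarrow> 0 < d \<and> e ^ d = 1 \<and> (\<forall>m. 0 < m \<and> m < d \<longrightarrow> e ^ m \<noteq> 1)"

definition Lset :: "nat \<Rightarrow> nat \<Rightarrow> 'a::field_gcd \<Rightarrow> nat \<Rightarrow> nat \<Rightarrow> 'a \<Rightarrow> 'a poly set" where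
  "Lset q d e k t lam = {L. degree L = t \<and> L \<noteq> 0 \<and> tilde_poly q L = smult lam L \<and>
      gcd L (monom 1 ((q + 1) div d) - [:e ^ k:]) = 1}"

end

theory Submission
  imports Defs
begin

text \<open>
  Comparing the extreme coefficients of \<open>tilde_poly q L\<^sub>k = \<lambda> L\<^sub>k\<close> for the binomial
  \<open>L\<^sub>k = C\<^sub>k + B\<^sub>k X^i2\<close> gives \<open>C\<^sub>k^q = \<lambda> B\<^sub>k\<close> and \<open>B\<^sub>k^q = \<lambda> C\<^sub>k\<close>. The first relation
  determines \<open>\<lambda>\<close>, and \<open>\<lambda>^N\<close> is a \<open>d\<close>-th root of unity, hence a power of \<open>\<epsilon>\<close>: this is (i).
  Multiplying the two relations shows that the norm \<open>C\<^sub>k^(q+1) = b^(q+1)\<close> does not depend on \<open>k\<close>.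
  With \<open>t = \<epsilon>^j1\<close> this norm equals \<open>1 + a^(q+1) + (a t^k + a^q t^-k)\<close>, and constancy of the
  last term at \<open>k = 0, 1, 2\<close> forces \<open>t = -1\<close> and \<open>a^q = -a\<close>. Hence \<open>d = 2 j1\<close>, and \<open>C\<^sub>k^q\<close>
  alternates between \<open>1 - a\<close> and \<open>1 + a\<close>, which gives the congruence in (ii).
\<close>

text \<open>Translation by \<open>1\<close> permutes the ring, so summing over it gives \<open>CARD('a) \<cdot> 1 = 0\<close>.\<close>
lemma of_nat_CARD_eq_0: "(of_nat CARD('a::{ring_1,finite}) :: 'a) = 0"
proof -
  have "(\<Sum>y\<in>UNIV. 1 + y) = (\<Sum>y\<in>UNIV. y :: 'a)"
    by (rule sum.reindex_bij_witness[of _ "\<lambda>y. y - 1" "\<lambda>y. 1 + y"]) auto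
  then show ?thesis
    by (simp add: sum.distrib)
qed

lemma CHAR_eq_if_CARD_eq_prime_power:
  assumes "prime p" "0 < n" "CARD('a::{field,finite}) = p ^ n"
  shows "CHAR('a) = p"
proof -
  have "prime CHAR('a)"
    by (rule prime_CHAR_semidom) (simp add: finite_imp_CHAR_pos)
  moreover have "CHAR('a) dvd p ^ n"
    using of_nat_CARD_eq_0[where 'a='a] assms(3) by (simp only: of_nat_eq_0_iff_char_dvd)
  ultimately show ?thesis
    using assms(1) by (metis prime_dvd_power primes_dvd_imp_eq)
qed

lemma frobenius_add:
  fixes x y :: "'a::{field,finite}"
  assumes "prime p" "0 < n" "CARD('a) = p ^ n"
  shows "(x + y) ^ (p ^ m) = x ^ (p ^ m) + y ^ (p ^ m)"
  using freshmans_dream' CHAR_eq_if_CARD_eq_prime_power[OF assms] assms(1) by blast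

lemma has_mult_order_nonzero: "has_mult_order e d \<Longrightarrow> e \<noteq> 0"
  by (auto simp: has_mult_order_def power_0_left)

lemma has_mult_order_power_mod:
  assumes "has_mult_order e d"
  shows "e ^ (n mod d) = e ^ n"
proof -
  have "e ^ n = e ^ (d * (n div d) + n mod d)"
    by simp
  also have "\<dots> = (e ^ d) ^ (n div d) * e ^ (n mod d)"
    by (simp only: power_add power_mult)
  finally show ?thesis
    using assms by (simp add: has_mult_order_def)
qed

lemma has_mult_order_power_eq_1_iff:
  assumes "has_mult_order e d"
  shows "e ^ n = 1 \<longleftrightarrow> d dvd n"
proof
  assume "e ^ n = 1"
  then have "e ^ (n mod d) = 1"
    by (simp add: has_mult_order_power_mod[OF assms])
  moreover have "n mod d < d"
    using assms by (simp add: has_mult_order_def)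
  ultimately have "n mod d = 0"
    using assms unfolding has_mult_order_def by (auto simp: gr0_conv_Suc)
  then show "d dvd n"
    by (simp add: dvd_eq_mod_eq_0)
next
  assume "d dvd n"
  then obtain c where "n = d * c" ..
  with assms show "e ^ n = 1"
    by (simp add: has_mult_order_def power_mult)
qed

lemma has_mult_order_powi_eq_1_iff:
  assumes "has_mult_order e d"
  shows "e powi z = 1 \<longleftrightarrow> int d dvd z"
proof (cases "0 \<le> z")
  case True
  then obtain n where "z = int n" by (metis nonneg_eq_int)
  with assms show ?thesis by (simp add: has_mult_order_power_eq_1_iff)
next
  case False
  then obtain n where "z = - int n"
    by (intro that[of "nat (- z)"]) simp
  with assms show ?thesis by (simp add: power_int_minus has_mult_order_power_eq_1_iff)
qed

lemma has_mult_order_powi_eq_iff: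
  assumes "has_mult_order e d"
  shows "e powi x = e powi y \<longleftrightarrow> x mod int d = y mod int d"
proof -
  have "e \<noteq> 0" using assms by (rule has_mult_order_nonzero)
  then have "e powi x = e powi y \<longleftrightarrow> e powi (x - y) = 1"
    by (simp add: power_int_diff)
  also have "\<dots> \<longleftrightarrow> x mod int d = y mod int d"
    by (simp add: has_mult_order_powi_eq_1_iff[OF assms] mod_eq_dvd_iff)
  finally show ?thesis .
qed

text \<open>The \<open>d\<close> distinct powers of \<open>e\<close> exhaust the at most \<open>d\<close> roots of \<open>X\<^sup>d - 1\<close>.\<close>
lemma has_mult_order_root_of_unity:
  fixes e x :: "'a::field"
  assumes e: "has_mult_order e d" and x: "x ^ d = 1"
  shows "\<exists>i. x = e ^ i"
proof -
  define p where "p = monom (1::'a) d + [:-1:]"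
  have d: "0 < d" and ed: "e ^ d = 1"
    using e by (simp_all add: has_mult_order_def)
  have roots: "poly p y = 0 \<longleftrightarrow> y ^ d = 1" for y
    by (simp add: p_def poly_monom)
  have "p \<noteq> 0"
    using roots[of 0] d by (auto simp: power_0_left)
  then have fin: "finite {y. poly p y = 0}"
    by (rule poly_roots_finite)
  have "degree p = d"
    using d by (simp add: p_def degree_add_eq_left degree_monom_eq)
  with \<open>p \<noteq> 0\<close> have bound: "card {y. poly p y = 0} \<le> d"
    using card_poly_roots_bound by metis
  have inj: "inj_on (\<lambda>i. e ^ i) {..<d}"
  proof (rule inj_onI)
    fix i j assume "i \<in> {..<d}" "j \<in> {..<d}" "e ^ i = e ^ j"
    then show "i = j"
      using has_mult_order_powi_eq_iff[OF e, of "int i" "int j"] by (simp add: zmod_int)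
  qed
  have sub: "(\<lambda>i. e ^ i) ` {..<d} \<subseteq> {y. poly p y = 0}"
  proof
    fix y assume "y \<in> (\<lambda>i. e ^ i) ` {..<d}"
    then obtain i where "y = e ^ i" by blast
    then have "y ^ d = (e ^ d) ^ i" by (simp flip: power_mult add: mult.commute)
    then show "y \<in> {y. poly p y = 0}" by (simp add: roots ed)
  qed
  have "(\<lambda>i. e ^ i) ` {..<d} = {y. poly p y = 0}"
    using card_subset_eq[OF fin sub] bound card_mono[OF fin sub] by (simp add: card_image[OF inj])
  with x show ?thesis by (auto simp: roots)
qed

lemma has_mult_order_power_pow_eq_1:
  assumes "has_mult_order e d" "d dvd m"
  shows "(e ^ n) ^ m = 1"
  using assms by (metis has_mult_order_power_eq_1_iff mult.commute power_mult power_one)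

lemma has_mult_order_power_eq_minus_one:
  assumes e: "has_mult_order e d" and j: "0 < j" "j < d" and "e ^ j = -1"
  shows "d = 2 * j"
proof -
  have "e ^ (2 * j) = 1"
    using \<open>e ^ j = -1\<close> by (simp add: mult.commute power_mult)
  then obtain c where c: "2 * j = d * c"
    using has_mult_order_power_eq_1_iff[OF e] by blast
  have "0 < c"
    using c j by (cases c) auto
  moreover have "d * c < d * 2"
    using c j by linarith
  ultimately have "c = 1"
    by simp
  with c show ?thesis by simp
qed

lemma coeff_tilde_poly:
  assumes "n \<le> degree f"
  shows "coeff (tilde_poly q f) n = coeff f (degree f - n) ^ q"
proof -
  have "coeff (tilde_poly q f) n = (\<Sum>i\<le>degree f. if i = degree f - n then coeff f i ^ q else 0)"
    unfolding tilde_poly_def coeff_sum coeff_monom by (rule sum.cong) (use assms in auto)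
  then show ?thesis by simp
qed

lemma tilde_poly_eq_smult_coeffs:
  assumes "tilde_poly q f = smult lam f"
  shows "lead_coeff f ^ q = lam * coeff f 0" and "coeff f 0 ^ q = lam * lead_coeff f"
  using coeff_tilde_poly[of 0 f q] coeff_tilde_poly[of "degree f" f q] by (simp_all add: assms)

lemma self_conjugate_binomial_coeffs:
  assumes "b \<noteq> 0" "0 < t" "tilde_poly q ([:c:] + monom b t) = smult lam ([:c:] + monom b t)"
  shows "c ^ q = lam * b \<and> b ^ q = lam * c"
proof -
  have "degree ([:c:] + monom b t) = t"
    using assms(1,2) by (simp add: degree_add_eq_right degree_monom_eq)
  moreover have "coeff ([:c:] + monom b t) t = b" "coeff ([:c:] + monom b t) 0 = c"
    using assms(2) by (simp_all add: coeff_monom coeff_pCons split: nat.split)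
  ultimately show ?thesis
    using tilde_poly_eq_smult_coeffs[OF assms(3)] by simp
qed

lemma norm_eq_if_conjugate_pair:
  fixes b c lam :: "'a::comm_semiring_1"
  assumes "c ^ q = lam * b" "b ^ q = lam * c"
  shows "c ^ (q + 1) = b ^ (q + 1)"
  using assms by (simp add: mult_ac)

lemma power_pred_eq_minus_one:
  fixes a :: "'a::field"
  assumes "a \<noteq> 0" "q \<noteq> 0" "a ^ q = -a"
  shows "a ^ (q - 1) = -1"
proof -
  have "a * a ^ (q - 1) = a * -1"
    using assms(2,3) by (metis power_eq_if mult_minus1_right)
  with assms(1) show ?thesis
    using mult_left_cancel by blast
qed

lemma frobenius_one_plus_mult:
  fixes a z :: "'a::field"
  assumes frob: "\<And>x y :: 'a. (x + y) ^ q = x ^ q + y ^ q" and z: "z ^ (q + 1) = 1"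
  shows "(1 + a * z) ^ q = 1 + a ^ q * inverse z"
proof -
  have "z * z ^ q = 1"
    using z by simp
  then have "z ^ q = inverse z"
    by (metis inverse_unique)
  with frob show ?thesis
    by (simp add: power_mult_distrib)
qed

lemma norm_one_plus_mult:
  fixes a z :: "'a::field"
  assumes frob: "\<And>x y :: 'a. (x + y) ^ q = x ^ q + y ^ q" and z: "z ^ (q + 1) = 1"
  shows "(1 + a * z) ^ (q + 1) = 1 + a ^ (q + 1) + (a * z + a ^ q * inverse z)"
proof -
  have "z \<noteq> 0"
    using z by (auto simp: power_0_left)
  have "(1 + a * z) ^ (q + 1) = (1 + a ^ q * inverse z) * (1 + a * z)"
    by (simp add: frobenius_one_plus_mult[OF frob z])
  also have "\<dots> = 1 + a ^ (q + 1) + (a * z + a ^ q * inverse z)"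
    using \<open>z \<noteq> 0\<close> by (simp add: field_simps)
  finally show ?thesis .
qed

lemma minus_one_if_twisted_sums_agree:
  fixes a a' t :: "'a::field"
  assumes "a \<noteq> 0" "t \<noteq> 0" "t \<noteq> 1"
    and sum1: "a * t + a' * inverse t = a + a'"
    and sum2: "a * t ^ 2 + a' * inverse (t ^ 2) = a + a'"
  shows "t = -1 \<and> a' = -a"
proof -
  have "(t - 1) * (a * t - a') = 0"
    using sum1 \<open>t \<noteq> 0\<close> by (simp add: field_simps)
  with \<open>t \<noteq> 1\<close> have a': "a' = a * t" by simp
  have "a * ((t - 1) ^ 2 * (t + 1)) = 0"
    using sum2 \<open>t \<noteq> 0\<close> unfolding a' by (simp add: field_simps) algebra
  with assms(1,3) have "t = -1"
    by (simp add: add_eq_0_iff2)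
  with a' show ?thesis by simp
qed

lemma constant_norm_forces_minus_one:
  fixes e a c :: "'a::field"
  assumes frob: "\<And>x y :: 'a. (x + y) ^ q = x ^ q + y ^ q"
    and e: "has_mult_order e d" and "d dvd q + 1" and "a \<noteq> 0" and j: "0 < j" "j < d"
    and norm: "\<And>k. k < d \<Longrightarrow> (1 + a * e ^ (j * k)) ^ (q + 1) = c"
  shows "e ^ j = -1 \<and> a ^ q = -a \<and> d = 2 * j"
proof -
  have unit: "(e ^ n) ^ (q + 1) = 1" for n
    using e \<open>d dvd q + 1\<close> by (rule has_mult_order_power_pow_eq_1)
  have periodic: "e ^ (j * k) = e ^ (j * (k mod d))" for k
  proof -
    have "e ^ (j * k) = (e ^ k) ^ j"
      by (simp only: mult.commute[of j] power_mult)
    also have "\<dots> = e ^ (j * (k mod d))"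
      by (simp only: mult.commute[of j] power_mult has_mult_order_power_mod[OF e])
    finally show ?thesis .
  qed
  have sums: "a * e ^ (j * k) + a ^ q * inverse (e ^ (j * k)) = a + a ^ q" for k
  proof -
    have "(1 + a * e ^ (j * k)) ^ (q + 1) = (1 + a * e ^ (j * 0)) ^ (q + 1)"
      using norm[of "k mod d"] norm[of 0] j periodic[of k] by simp
    then show ?thesis
      unfolding norm_one_plus_mult[OF frob unit] by simp
  qed
  have sum2: "a * (e ^ j) ^ 2 + a ^ q * inverse ((e ^ j) ^ 2) = a + a ^ q"
    using sums[of 2] by (simp add: power_mult)
  have "e ^ j \<noteq> 0"
    using has_mult_order_nonzero[OF e] by simp
  moreover have "e ^ j \<noteq> 1"
    using e j by (simp add: has_mult_order_def)
  ultimately have "e ^ j = -1 \<and> a ^ q = -a"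
    using minus_one_if_twisted_sums_agree[OF \<open>a \<noteq> 0\<close> _ _ _ sum2] sums[of 1] by simp
  moreover have "d = 2 * j"
    using has_mult_order_power_eq_minus_one[OF e j] calculation by simp
  ultimately show ?thesis by simp
qed

lemma mu_times_power_exponent:
  fixes e lam :: "'a::field"
  assumes e: "has_mult_order e d" and "q + 1 = N * d" and "lam ^ (q + 1) = 1"
  shows "\<exists>\<alpha>::int. (lam * e ^ j) ^ N = e powi \<alpha> \<and> lam ^ N = e powi (- int (j * N) + \<alpha>)"
proof -
  have "(lam ^ N) ^ d = 1"
    using assms(2,3) by (simp flip: power_mult)
  then obtain i where i: "lam ^ N = e ^ i"
    using has_mult_order_root_of_unity[OF e] by blast
  have "(lam * e ^ j) ^ N = e ^ (i + j * N)"
    by (simp add: power_mult_distrib i power_add power_mult)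
  then have "(lam * e ^ j) ^ N = e powi int (i + j * N)"
    by (simp only: power_int_of_nat)
  moreover have "- int (j * N) + int (i + j * N) = int i"
    by simp
  then have "lam ^ N = e powi (- int (j * N) + int (i + j * N))"
    by (simp only: i power_int_of_nat)
  ultimately show ?thesis by blast
qed

lemma quotient_exponent_mod:
  fixes e lam w :: "'a::field"
  assumes e: "has_mult_order e d"
    and "lam = w / e ^ m" "w ^ N = e powi s" "lam ^ N = e powi \<pi>"
  shows "\<pi> mod int d = (s - int (m * N)) mod int d"
proof -
  have "e \<noteq> 0"
    using e by (rule has_mult_order_nonzero)
  moreover have "(e ^ m) ^ N = e powi int (m * N)"
    by (simp only: power_int_of_nat power_mult)
  ultimately have "lam ^ N = e powi (s - int (m * N))"
    using assms(2,3) by (simp add: power_divide power_int_diff)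
  with assms(4) show ?thesis
    by (simp add: has_mult_order_powi_eq_iff[OF e])
qed

lemma self_conjugate_binomial_eigenvalue:
  fixes e a b lam :: "'a::field"
  assumes frob: "\<And>x y :: 'a. (x + y) ^ q = x ^ q + y ^ q"
    and e: "has_mult_order e d" and qN: "q + 1 = N * d" and "b \<noteq> 0" and lam: "lam ^ (q + 1) = 1"
    and conj: "(1 + a * e ^ (j1 * k)) ^ q = lam * (b * e ^ (j2 * k))"
  shows "lam = (1 + a * e ^ (j1 * k)) ^ q / (b * e ^ (j2 * k)) \<and>
    (\<exists>\<alpha>::int. ((1 + a ^ q * e powi (- int (j1 * k))) / b) ^ N = e powi \<alpha> \<and>
       lam ^ N = e powi (- int (j2 * k * N) + \<alpha>))"
proof -
  have "e \<noteq> 0"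
    using e by (rule has_mult_order_nonzero)
  have "d dvd q + 1"
    using qN by simp
  then have unit: "(e ^ n) ^ (q + 1) = 1" for n
    using e by (intro has_mult_order_power_pow_eq_1)
  have "e powi (- int (j1 * k)) = inverse (e ^ (j1 * k))"
    by (simp only: power_int_minus power_int_of_nat)
  then have "1 + a ^ q * e powi (- int (j1 * k)) = lam * (b * e ^ (j2 * k))"
    using frobenius_one_plus_mult[OF frob unit] conj by simp
  then have "(1 + a ^ q * e powi (- int (j1 * k))) / b = lam * e ^ (j2 * k)"
    using \<open>b \<noteq> 0\<close> by (simp add: field_simps)
  moreover have "lam = (1 + a * e ^ (j1 * k)) ^ q / (b * e ^ (j2 * k))"
    using conj \<open>b \<noteq> 0\<close> \<open>e \<noteq> 0\<close> by simp
  ultimately show ?thesis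
    using mu_times_power_exponent[OF e qN lam, of "j2 * k"] by simp
qed

lemma self_conjugate_binomial_exponent_mod:
  fixes e a b lam :: "'a::field"
  assumes frob: "\<And>x y :: 'a. (x + y) ^ q = x ^ q + y ^ q"
    and e: "has_mult_order e d" and "d dvd q + 1"
    and minus: "e ^ j1 = -1" "a ^ q = -a" and "1 - a \<noteq> 0" "b \<noteq> 0"
    and conj: "(1 + a * e ^ (j1 * k)) ^ q = lam * (b * e ^ (j2 * k))"
    and hu: "((1 - a) / b) ^ N = e powi u" and hv: "((1 + a) / (1 - a)) ^ N = e powi v"
    and hpi: "lam ^ N = e powi \<pi>"
  shows "\<pi> mod int d = ((if even k then 0 else 1) * v + u - int (j2 * k * N)) mod int d"
proof -
  have "e \<noteq> 0"
    using e by (rule has_mult_order_nonzero)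
  have unit: "(e ^ n) ^ (q + 1) = 1" for n
    using e \<open>d dvd q + 1\<close> by (rule has_mult_order_power_pow_eq_1)
  have "e ^ (j1 * k) = (-1) ^ k"
    using minus by (simp add: power_mult)
  then have "(1 + a * e ^ (j1 * k)) ^ q = (if even k then 1 - a else 1 + a)"
    using frobenius_one_plus_mult[OF frob unit, of a "j1 * k"] minus by simp
  with conj have "lam = (if even k then 1 - a else 1 + a) / b / e ^ (j2 * k)"
    using \<open>b \<noteq> 0\<close> \<open>e \<noteq> 0\<close> by (simp add: field_simps)
  moreover have "((if even k then 1 - a else 1 + a) / b) ^ N = e powi ((if even k then 0 else 1) * v + u)"
  proof (cases "even k")
    case False
    have "(1 + a) / b = (1 + a) / (1 - a) * ((1 - a) / b)"
      using \<open>1 - a \<noteq> 0\<close> by simp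
    then have "((1 + a) / b) ^ N = e powi v * e powi u"
      by (simp only: power_mult_distrib hu hv)
    with False \<open>e \<noteq> 0\<close> show ?thesis
      by (simp add: power_int_add)
  qed (use hu in simp)
  ultimately show ?thesis
    using quotient_exponent_mod[OF e _ _ hpi] by blast
qed

lemma self_conjugate_binomial_family:
  fixes e a b :: "'a::field" and lam :: "nat \<Rightarrow> 'a" and i2 :: nat
  assumes frob: "\<And>x y :: 'a. (x + y) ^ q = x ^ q + y ^ q"
    and e: "has_mult_order e d" and qN: "q + 1 = N * d" and "a \<noteq> 0" "b \<noteq> 0"
    and j1: "0 < j1" "j1 < d"
    and nz: "\<forall>k<d. 1 + a * e ^ (j1 * k) \<noteq> 0"
    and conj: "\<forall>k<d. (1 + a * e ^ (j1 * k)) ^ q = lam k * (b * e ^ (j2 * k)) \<and>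
                     (b * e ^ (j2 * k)) ^ q = lam k * (1 + a * e ^ (j1 * k))"
  shows "even d \<and> j1 = d div 2 \<and> a ^ (q - 1) = -1 \<and> (1 - a) / b \<in> mu q \<and>
    ((1 + a) / (1 - a)) ^ (q + 1) = 1 \<and>
    (\<forall>(u::int) (v::int) (\<pi>::nat \<Rightarrow> int).
        ((1 - a) / b) ^ N = e powi u \<longrightarrow>
        ((1 + a) / (1 - a)) ^ N = e powi v \<longrightarrow>
        (\<forall>k<d. lam k ^ N = e powi \<pi> k) \<longrightarrow>
        (\<forall>k<d. \<forall>r::int.
           (\<pi> k + (r - int i2) * int k) mod int d
            = ((- int j2 * int N + r - int i2) * int k + (if even k then 0 else 1) * v + u)
              mod int d))"
proof -
  have "d dvd q + 1"
    using qN by simp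
  then have unit: "(e ^ n) ^ (q + 1) = 1" for n
    using e by (intro has_mult_order_power_pow_eq_1)
  have norm: "(1 + a * e ^ (j1 * k)) ^ (q + 1) = b ^ (q + 1)" if "k < d" for k
  proof -
    have "(1 + a * e ^ (j1 * k)) ^ (q + 1) = (b * e ^ (j2 * k)) ^ (q + 1)"
      using conj that by (intro norm_eq_if_conjugate_pair[of _ q "lam k"]) blast+
    also have "\<dots> = b ^ (q + 1)"
      using unit[of "j2 * k"] by (simp add: power_mult_distrib)
    finally show ?thesis .
  qed
  then have minus: "e ^ j1 = -1 \<and> a ^ q = -a \<and> d = 2 * j1"
    using constant_norm_forces_minus_one[OF frob e \<open>d dvd q + 1\<close> \<open>a \<noteq> 0\<close> j1] by blast
  have "q \<noteq> 0"
    using frob[of 1 0] by (simp add: power_0_left split: if_splits)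
  then have "a ^ (q - 1) = -1"
    using minus \<open>a \<noteq> 0\<close> by (intro power_pred_eq_minus_one) simp_all
  have "1 < d"
    using j1 by simp
  then have "1 - a \<noteq> 0" and n1: "(1 - a) ^ (q + 1) = b ^ (q + 1)"
    using nz norm[of 1] minus by auto
  have n0: "(1 + a) ^ (q + 1) = b ^ (q + 1)"
    using norm[of 0] j1 by simp
  have "(\<pi> k + (r - int i2) * int k) mod int d
      = ((- int j2 * int N + r - int i2) * int k + (if even k then 0 else 1) * v + u) mod int d"
    if hu: "((1 - a) / b) ^ N = e powi u" and hv: "((1 + a) / (1 - a)) ^ N = e powi v"
      and hpi: "\<forall>k<d. lam k ^ N = e powi \<pi> k" and "k < d" for u v :: int and \<pi> :: "nat \<Rightarrow> int" and k r
  proof -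
    have "\<pi> k mod int d = ((if even k then 0 else 1) * v + u - int (j2 * k * N)) mod int d"
      using self_conjugate_binomial_exponent_mod[OF frob e \<open>d dvd q + 1\<close> _ _ \<open>1 - a \<noteq> 0\<close> \<open>b \<noteq> 0\<close> _ hu hv]
        minus conj hpi \<open>k < d\<close> by blast
    then have "(\<pi> k + (r - int i2) * int k) mod int d
      = ((if even k then 0 else 1) * v + u - int (j2 * k * N) + (r - int i2) * int k) mod int d"
      by (rule mod_add_cong) simp
    then show ?thesis
      by (simp add: algebra_simps)
  qed
  with minus \<open>a ^ (q - 1) = -1\<close> n1 n0 \<open>1 - a \<noteq> 0\<close> \<open>b \<noteq> 0\<close> show ?thesis
    by (auto simp: mu_def power_divide)
qed

theorem lemma4p1:
  fixes q d :: nat and e a b :: "'a::{field_gcd,finite}" and j1 i2 j2 :: nat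
  defines "N \<equiv> (q + 1) div d"
  defines "Lk \<equiv> (\<lambda>k::nat. [:1 + a * e ^ (j1 * k):] + monom (b * e ^ (j2 * k)) i2)"
  assumes q_pp: "\<exists>p m. prime p \<and> 0 < m \<and> q = p ^ m"
    and card: "CARD('a) = q ^ 2"
    and d_dvd: "d dvd q + 1"
    and e_ord: "has_mult_order e d"
    and a_nz: "a \<noteq> 0" and b_nz: "b \<noteq> 0"
    and j1: "0 < j1" "j1 < d"
    and i2: "0 < i2" "i2 < N"
    and j2: "j2 < d"
    and nz: "\<forall>k<d. 1 + a * e ^ (j1 * k) \<noteq> 0"
  shows
   "(\<forall>k<d. \<forall>lam. lam \<in> mu q \<and> Lk k \<in> Lset q d e k i2 lam \<longrightarrow>
        lam = (1 + a * e ^ (j1 * k)) ^ q / (b * e ^ (j2 * k)) \<and>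
        (\<exists>\<alpha>::int. ((1 + a ^ q * e powi (- int (j1 * k))) / b) ^ N = e powi \<alpha> \<and>
                   lam ^ N = e powi (- int (j2 * k * N) + \<alpha>)))
    \<and>
    (\<forall>lam::nat \<Rightarrow> 'a. (\<forall>k<d. lam k \<in> mu q \<and> Lk k \<in> Lset q d e k i2 (lam k)) \<longrightarrow>
        even d \<and> j1 = d div 2 \<and> a ^ (q - 1) = -1 \<and> (1 - a) / b \<in> mu q \<and>
        ((1 + a) / (1 - a)) ^ (q + 1) = 1 \<and>
        (\<forall>(u::int) (v::int) (\<pi>::nat \<Rightarrow> int).
            ((1 - a) / b) ^ N = e powi u \<longrightarrow>
            ((1 + a) / (1 - a)) ^ N = e powi v \<longrightarrow>
            (\<forall>k<d. lam k ^ N = e powi \<pi> k) \<longrightarrow>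
            (\<forall>k<d. \<forall>r::int.
               (\<pi> k + (r - int i2) * int k) mod int d
                = ((- int j2 * int N + r - int i2) * int k + (if even k then 0 else 1) * v + u)
                  mod int d)))"
proof -
  obtain p m where "prime p" "0 < m" "q = p ^ m"
    using q_pp by blast
  then have frob: "(x + y) ^ q = x ^ q + y ^ q" for x y :: 'a
    using frobenius_add[where 'a='a, of p "m * 2"] card by (simp add: power_mult)
  have qN: "q + 1 = N * d"
    using d_dvd by (simp add: N_def)
  have conj: "(1 + a * e ^ (j1 * k)) ^ q = lam * (b * e ^ (j2 * k)) \<and>
      (b * e ^ (j2 * k)) ^ q = lam * (1 + a * e ^ (j1 * k))"
    if "Lk k \<in> Lset q d e k i2 lam" for k lam
    using self_conjugate_binomial_coeffs[of "b * e ^ (j2 * k)" i2 q "1 + a * e ^ (j1 * k)" lam]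
      that b_nz has_mult_order_nonzero[OF e_ord] i2(1) by (simp add: Lk_def Lset_def)
  show ?thesis
    using self_conjugate_binomial_eigenvalue[OF frob e_ord qN b_nz]
      self_conjugate_binomial_family[OF frob e_ord qN a_nz b_nz j1 nz] conj
    unfolding mu_def by blast
qed

end
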